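(* Fix any total budget $\mathrm{TB}\in\mathbb N_0$. For any number game $G$, the unique inverse of $G$ (up to equality of games) is $\bar G$; that is, $G+\bar G=0$, and if $G'$ is any game form with $G+G'=0$ then $G'=\bar G$.
   Context: Game forms are defined recursively: $G=\{G^{\mathcal L}\mid G^{\mathcal R}\}$ with finite sets of Left and Right options, and finite birthday. $0=\{\varnothing\mid\varnothing\}$. The conjugate is $\bar G=\{\overline{G^{\mathcal R}}\mid\overline{G^{\mathcal L}}\}$. The budget set for total budget $\mathrm{TB}$ is $\mathcal B=\{0,\dots,\mathrm{TB},\hat 0,\dots,\widehat{\mathrm{TB}}\}$: state $p$ (resp. $\hat p$) means Left holds $p$ dollars and Right holds $\mathrm{TB}-p$, and Right (resp. Left) holds the tie-breaking marker. Play of $(G,\tilde p)$: at every position (terminal ones included) both players bid simultaneously, Left $\ell\in\{0,\dots,p\}$, Right $r\in\{0,\dots,\mathrm{TB}-p\}$. If Left holds the marker (state $\hat p$): if $\ell>r$ Left moves to $(G^L,\widehat{p-\ell})$, or, including the marker (allowed when $\ell\ge r$), to $(G^L,p-\ell)$; if $\ell=r$ Left wins, the marker passes to Right, play continues at $(G^L,p-\ell)$; if $\ell<r$ Right moves to $(G^R,\widehat{p+r})$. Symmetrically when Right holds the marker (state $p$): if $r>\ell$ Right moves to $(G^R,p+r)$ or, including the marker, to $(G^R,\widehat{p+r})$; if $r=\ell$ Right wins, the marker passes to Left, play continues at $(G^R,\widehat{p+r})$; if $r<\ell$ Left moves to $(G^L,p-\ell)$. A player who wins a bid but has no option loses. $o(G,\tilde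 p)\in\{\mathrm L,\mathrm R\}$ is the winner under optimal play; $\mathrm L>\mathrm R$. Disjunctive sum $G+H=\{G^{\mathcal L}+H,G+H^{\mathcal L}\mid G^{\mathcal R}+H,G+H^{\mathcal R}\}$. $G\ge H$ means $o(G+X,\tilde p)\ge o(H+X,\tilde p)$ for all game forms $X$ and all $\tilde p\in\mathcal B$; $G=H$ means $G\ge H$ and $H\ge G$; $G>H$ means $G\ge H$ and not $H\ge G$. A game form $G$ is a number if all its options are numbers and $G^L<G<G^R$ for all $G^L\in G^{\mathcal L}$, $G^R\in G^{\mathcal R}$. An inverse of $G$ is a game form $G'$ with $G+G'=0$. *)

theory Defs
  imports "HOL-Library.FSet"
begin

text \<open>Game forms: finite sets of Left and Right options; finite birthday is
automatic since the datatype is inductive.\<close>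
datatype game = Game (lopts: "game fset") (ropts: "game fset")

definition zero_game :: game where
  "zero_game = Game {||} {||}"

lemma game_lopt_size_less: "g |\<in>| L \<Longrightarrow> size g < size (Game L R)"
proof -
  assume "g |\<in>| L"
  then have "Suc (size g) \<le> (\<Sum>x\<in>fset L. Suc (size x))"
    by (intro member_le_sum) auto
  then show ?thesis by simp
qed

lemma game_ropt_size_less: "g |\<in>| R \<Longrightarrow> size g < size (Game L R)"
proof -
  assume "g |\<in>| R"
  then have "Suc (size g) \<le> (\<Sum>x\<in>fset R. Suc (size x))"
    by (intro member_le_sum) auto
  then show ?thesis by simp
qed

primrec conj_game :: "game \<Rightarrow> game" where
  "conj_game (Game L R) = Game (fimage conj_game R) (fimage conj_game L)"

function (sequential) gsum :: "game \<Rightarrow> game \<Rightarrow> game" where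
  "gsum (Game GL GR) (Game HL HR) =
     Game ((\<lambda>g. gsum g (Game HL HR)) |`| GL |\<union>| (\<lambda>h. gsum (Game GL GR) h) |`| HL)
          ((\<lambda>g. gsum g (Game HL HR)) |`| GR |\<union>| (\<lambda>h. gsum (Game GL GR) h) |`| HR)"
  by pat_completeness auto
termination
  by (relation "measure (\<lambda>(g, h). size g + size h)")
     (auto dest: game_lopt_size_less game_ropt_size_less)

text \<open>A budget state is a pair (p, lm): Left holds p dollars, Right holds TB - p;
  lm = True means Left holds the tie-breaking marker (state \<open>p-hat\<close>),
  lm = False means Right holds it (state \<open>p\<close>).
  \<open>left_wins TB G p lm\<close> holds iff the outcome of (G, state) is L,
  i.e. Left has a strategy guaranteeing a win: Left can choose a bid l such that
  for every Right bid r the resulting continuation is won by Left.\<close>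
function (sequential) left_wins :: "nat \<Rightarrow> game \<Rightarrow> nat \<Rightarrow> bool \<Rightarrow> bool" where
  "left_wins TB (Game L R) p True =
     (\<exists>l\<le>p. \<forall>r\<le>TB - p.
        (if r < l then (\<exists>g\<in>fset L. (left_wins TB g (p - l) True \<or> left_wins TB g (p - l) False))
         else if r = l then (\<exists>g\<in>fset L. left_wins TB g (p - l) False)
         else (\<forall>g\<in>fset R. left_wins TB g (p + r) True)))"
| "left_wins TB (Game L R) p False =
     (\<exists>l\<le>p. \<forall>r\<le>TB - p.
        (if l < r then (\<forall>g\<in>fset R. left_wins TB g (p + r) False \<and> left_wins TB g (p + r) True)
         else if l = r then (\<forall>g\<in>fset R. left_wins TB g (p + r) True)
         else (\<exists>g\<in>fset L. left_wins TB g (p - l) False)))"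
  by pat_completeness auto
termination
  by (relation "measure (\<lambda>(_, g, _, _). size g)")
     (auto dest: game_lopt_size_less game_ropt_size_less)

text \<open>Outcomes: True = L, False = R, with L > R.
  \<open>G \<ge> H\<close>: for all game forms X and all budget states in the budget set,
  o(G+X) \<ge> o(H+X).\<close>
definition game_ge :: "nat \<Rightarrow> game \<Rightarrow> game \<Rightarrow> bool" where
  "game_ge TB G H =
     (\<forall>X p lm. p \<le> TB \<longrightarrow> left_wins TB (gsum H X) p lm \<longrightarrow> left_wins TB (gsum G X) p lm)"

definition game_eq :: "nat \<Rightarrow> game \<Rightarrow> game \<Rightarrow> bool" where
  "game_eq TB G H = (game_ge TB G H \<and> game_ge TB H G)"

definition game_less :: "nat \<Rightarrow> game \<Rightarrow> game \<Rightarrow> bool" where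
  "game_less TB G H = (game_ge TB H G \<and> \<not> game_ge TB G H)"

function (sequential) is_number :: "nat \<Rightarrow> game \<Rightarrow> bool" where
  "is_number TB (Game L R) =
     ((\<forall>g\<in>fset L. is_number TB g) \<and> (\<forall>g\<in>fset R. is_number TB g) \<and>
      (\<forall>gl\<in>fset L. game_less TB gl (Game L R)) \<and>
      (\<forall>gr\<in>fset R. game_less TB (Game L R) gr))"
  by pat_completeness auto
termination
  by (relation "measure (\<lambda>(_, g). size g)")
     (auto dest: game_lopt_size_less game_ropt_size_less)

end

theory Submission
  imports Defs
begin

(* G + conj G >= 0 is proved by strategy copying: if Left wins X, she wins (G + conj G) + X by
   bidding as in X and answering there. Right's moves in G + conj G lead to G^R + conj G or to
   G + conj G^L, both at least as good for Left because G^L < G < G^R; the second move may come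
   from a tie won by Right, after which Left holds the marker, so the induction also carries the
   marker version of G - G^L >= 0 (game_ge_marker). Since outcomes are not known to be symmetric
   under conjugation, the inequality 0 >= G + conj G needs the mirror argument for Right.
   Uniqueness of the inverse is then the usual monoid argument. *)

lemma lopts_gsum:
  "lopts (gsum A B) = (\<lambda>g. gsum g B) |`| lopts A |\<union>| gsum A |`| lopts B"
  by (cases A; cases B) simp

lemma ropts_gsum:
  "ropts (gsum A B) = (\<lambda>g. gsum g B) |`| ropts A |\<union>| gsum A |`| ropts B"
  by (cases A; cases B) simp

lemma lopts_gsumI1: "g |\<in>| lopts A \<Longrightarrow> gsum g B |\<in>| lopts (gsum A B)"
  and lopts_gsumI2: "h |\<in>| lopts B \<Longrightarrow> gsum A h |\<in>| lopts (gsum A B)"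
  and ropts_gsumI1: "g |\<in>| ropts A \<Longrightarrow> gsum g B |\<in>| ropts (gsum A B)"
  and ropts_gsumI2: "h |\<in>| ropts B \<Longrightarrow> gsum A h |\<in>| ropts (gsum A B)"
  by (simp_all add: lopts_gsum ropts_gsum)

lemma lopts_gsumE:
  assumes "x |\<in>| lopts (gsum A B)"
  obtains g where "g |\<in>| lopts A" "x = gsum g B" | h where "h |\<in>| lopts B" "x = gsum A h"
  using assms by (auto simp: lopts_gsum)

lemma ropts_gsumE:
  assumes "x |\<in>| ropts (gsum A B)"
  obtains g where "g |\<in>| ropts A" "x = gsum g B" | h where "h |\<in>| ropts B" "x = gsum A h"
  using assms by (auto simp: ropts_gsum)

lemma lopts_conj_game [simp]: "lopts (conj_game A) = conj_game |`| ropts A"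
  by (cases A) simp

lemma ropts_conj_game [simp]: "ropts (conj_game A) = conj_game |`| lopts A"
  by (cases A) simp

lemma size_lopt: "g |\<in>| lopts X \<Longrightarrow> size g < size X"
  by (cases X) (auto dest: game_lopt_size_less)

lemma size_ropt: "g |\<in>| ropts X \<Longrightarrow> size g < size X"
  by (cases X) (auto dest: game_ropt_size_less)

lemma gsum_zero_left [simp]: "gsum zero_game X = X"
  by (induction X) (simp add: zero_game_def fset.map_ident_strong)

lemma gsum_commute: "gsum A B = gsum B A"
proof (induction "size A + size B" arbitrary: A B rule: less_induct)
  case less
  have A: "gsum g B = gsum B g" if "g |\<in>| lopts A \<or> g |\<in>| ropts A" for g
    using that less size_lopt size_ropt by (metis add_less_mono1)
  have B: "gsum A g = gsum g A" if "g |\<in>| lopts B \<or> g |\<in>| ropts B" for g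
    using that less size_lopt size_ropt by (metis nat_add_left_cancel_less)
  show ?case
    by (intro game.expand conjI)
       (simp_all add: lopts_gsum ropts_gsum A B funion_commute cong: fimage_cong)
qed

lemma gsum_assoc: "gsum (gsum A B) C = gsum A (gsum B C)"
proof (induction "size A + size B + size C" arbitrary: A B C rule: less_induct)
  case less
  have A: "gsum (gsum g B) C = gsum g (gsum B C)" if "g |\<in>| lopts A \<or> g |\<in>| ropts A" for g
    using that less size_lopt size_ropt by (metis add_less_mono1)
  have B: "gsum (gsum A g) C = gsum A (gsum g C)" if "g |\<in>| lopts B \<or> g |\<in>| ropts B" for g
    using that less size_lopt size_ropt by (metis add_less_mono1 nat_add_left_cancel_less)
  have C: "gsum (gsum A B) g = gsum A (gsum B g)" if "g |\<in>| lopts C \<or> g |\<in>| ropts C" for g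
    using that less size_lopt size_ropt by (metis nat_add_left_cancel_less)
  show ?case
    by (intro game.expand conjI)
       (simp_all add: lopts_gsum ropts_gsum A B C funion_assoc fimage_funion fimage_fimage o_def
         cong: fimage_cong)
qed

interpretation gsum: abel_semigroup gsum
  by unfold_locales (fact gsum_assoc, fact gsum_commute)

lemma is_number_lopt:
  "is_number TB G \<Longrightarrow> GL |\<in>| lopts G \<Longrightarrow> is_number TB GL \<and> game_ge TB G GL"
  by (cases G) (auto simp: game_less_def)

lemma is_number_ropt:
  "is_number TB G \<Longrightarrow> GR |\<in>| ropts G \<Longrightarrow> is_number TB GR \<and> game_ge TB GR G"
  by (cases G) (auto simp: game_less_def)

definition left_wins_round :: "nat \<Rightarrow> game \<Rightarrow> nat \<Rightarrow> bool \<Rightarrow> nat \<Rightarrow> nat \<Rightarrow> bool" where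
  "left_wins_round TB X p lm l r =
     (if lm then
        if r < l then \<exists>g\<in>fset (lopts X). left_wins TB g (p - l) True \<or> left_wins TB g (p - l) False
        else if r = l then \<exists>g\<in>fset (lopts X). left_wins TB g (p - l) False
        else \<forall>g\<in>fset (ropts X). left_wins TB g (p + r) True
      else
        if l < r then \<forall>g\<in>fset (ropts X). left_wins TB g (p + r) False \<and> left_wins TB g (p + r) True
        else if l = r then \<forall>g\<in>fset (ropts X). left_wins TB g (p + r) True
        else \<exists>g\<in>fset (lopts X). left_wins TB g (p - l) False)"

lemma left_wins_iff_round:
  "left_wins TB X p lm = (\<exists>l\<le>p. \<forall>r\<le>TB - p. left_wins_round TB X p lm l r)"
  by (cases X; cases lm) (simp_all add: left_wins_round_def)

lemma not_left_wins_iff_round: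
  "\<not> left_wins TB X p lm \<longleftrightarrow> (\<forall>l\<le>p. \<exists>r\<le>TB - p. \<not> left_wins_round TB X p lm l r)"
  unfolding left_wins_iff_round by blast

lemma left_wins_round_True:
  "r < l \<Longrightarrow> left_wins_round TB X p True l r =
     (\<exists>g\<in>fset (lopts X). left_wins TB g (p - l) True \<or> left_wins TB g (p - l) False)"
  "left_wins_round TB X p True l l = (\<exists>g\<in>fset (lopts X). left_wins TB g (p - l) False)"
  "l < r \<Longrightarrow> left_wins_round TB X p True l r = (\<forall>g\<in>fset (ropts X). left_wins TB g (p + r) True)"
  by (simp_all add: left_wins_round_def)

lemma left_wins_round_False:
  "r < l \<Longrightarrow> left_wins_round TB X p False l r = (\<exists>g\<in>fset (lopts X). left_wins TB g (p - l) False)"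
  "left_wins_round TB X p False l l = (\<forall>g\<in>fset (ropts X). left_wins TB g (p + l) True)"
  "l < r \<Longrightarrow> left_wins_round TB X p False l r =
     (\<forall>g\<in>fset (ropts X). left_wins TB g (p + r) False \<and> left_wins TB g (p + r) True)"
  by (simp_all add: left_wins_round_def)

lemma left_wins_round_mono:
  assumes "left_wins_round TB X p lm l r" "p \<le> p'" "p' \<le> TB" "r \<le> TB - p'"
    and mono: "\<And>g q q' lm. g |\<in>| lopts X \<or> g |\<in>| ropts X \<Longrightarrow> left_wins TB g q lm \<Longrightarrow>
           q \<le> q' \<Longrightarrow> q' \<le> TB \<Longrightarrow> left_wins TB g q' lm"
  shows "left_wins_round TB X p' lm l r"
proof -
  have lopt: "left_wins TB g (p' - l) lm'" if "g |\<in>| lopts X" "left_wins TB g (p - l) lm'" for g lm'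
    using mono[of g "p - l" lm' "p' - l"] that assms(2,3) by auto
  have ropt: "left_wins TB g (p' + r) lm'" if "g |\<in>| ropts X" "left_wins TB g (p + r) lm'" for g lm'
    using mono[of g "p + r" lm' "p' + r"] that assms(2-4) by auto
  from assms(1) show ?thesis
    by (cases lm; cases r l rule: linorder_cases)
       (simp_all add: left_wins_round_True left_wins_round_False; use lopt ropt in blast)+
qed

lemma left_wins_mono:
  "left_wins TB X p lm \<Longrightarrow> p \<le> p' \<Longrightarrow> p' \<le> TB \<Longrightarrow> left_wins TB X p' lm"
proof (induction X arbitrary: p p' lm)
  case (Game L R)
  from Game.prems(1) obtain l where "l \<le> p"
    and win: "\<And>r. r \<le> TB - p \<Longrightarrow> left_wins_round TB (Game L R) p lm l r"
    unfolding left_wins_iff_round by blast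
  have "left_wins_round TB (Game L R) p' lm l r" if "r \<le> TB - p'" for r
    using Game.prems Game.IH that
    by (intro left_wins_round_mono[OF win]) auto
  with \<open>l \<le> p\<close> Game.prems(2) show ?case
    unfolding left_wins_iff_round by (meson order_trans)
qed

(* Left copies her bids for X in Y + X and answers in X; the hypotheses on Y cover the moves
   Right can make in Y, i.e. after outbidding Left or after winning a tie with the marker. *)
lemma left_wins_gsum_True:
  assumes "left_wins TB X p True" "p \<le> TB"
    and opts: "\<And>X' q lm. X' |\<in>| lopts X \<or> X' |\<in>| ropts X \<Longrightarrow> q \<le> TB \<Longrightarrow>
                 left_wins TB X' q lm \<Longrightarrow> left_wins TB (gsum Y X') q lm"
    and ropts_Y: "\<And>YR r. YR |\<in>| ropts Y \<Longrightarrow> 0 < r \<Longrightarrow> p + r \<le> TB \<Longrightarrow>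
                 left_wins TB (gsum YR X) (p + r) True"
  shows "left_wins TB (gsum Y X) p True"
proof -
  obtain l where "l \<le> p" and win: "\<And>r. r \<le> TB - p \<Longrightarrow> left_wins_round TB X p True l r"
    using assms(1) unfolding left_wins_iff_round by blast
  have "left_wins_round TB (gsum Y X) p True l r" if "r \<le> TB - p" for r
    using win[OF that] opts[of _ "p - l"] opts[of _ "p + r"] ropts_Y[of _ r] \<open>p \<le> TB\<close> that
    by (cases r l rule: linorder_cases)
       (fastforce simp: left_wins_round_True intro: lopts_gsumI2 elim!: ropts_gsumE)+
  with \<open>l \<le> p\<close> show ?thesis
    unfolding left_wins_iff_round by blast
qed

lemma left_wins_gsum_False:
  assumes "left_wins TB X p False" "p \<le> TB"
    and opts: "\<And>X' q lm. X' |\<in>| lopts X \<or> X' |\<in>| ropts X \<Longrightarrow> q \<le> TB \<Longrightarrow>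
                 left_wins TB X' q lm \<Longrightarrow> left_wins TB (gsum Y X') q lm"
    and ropts_Y: "\<And>YR r. YR |\<in>| ropts Y \<Longrightarrow> p + r \<le> TB \<Longrightarrow>
                 left_wins TB (gsum YR X) (p + r) True"
    and ropts_Y_False: "\<And>YR r. YR |\<in>| ropts Y \<Longrightarrow> 0 < r \<Longrightarrow> p + r \<le> TB \<Longrightarrow>
                 left_wins TB (gsum YR X) (p + r) False"
  shows "left_wins TB (gsum Y X) p False"
proof -
  obtain l where "l \<le> p" and win: "\<And>r. r \<le> TB - p \<Longrightarrow> left_wins_round TB X p False l r"
    using assms(1) unfolding left_wins_iff_round by blast
  have "left_wins_round TB (gsum Y X) p False l r" if "r \<le> TB - p" for r
    using win[OF that] opts[of _ "p - l"] opts[of _ "p + r"] ropts_Y[of _ r] ropts_Y_False[of _ r]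
      \<open>p \<le> TB\<close> that
    by (cases r l rule: linorder_cases)
       (fastforce simp: left_wins_round_False intro: lopts_gsumI2 elim!: ropts_gsumE)+
  with \<open>l \<le> p\<close> show ?thesis
    unfolding left_wins_iff_round by blast
qed

lemma left_wins_gsum_True_of_False:
  assumes "left_wins TB X p False" "p \<le> TB"
    and opts: "\<And>X' q lm. X' |\<in>| lopts X \<or> X' |\<in>| ropts X \<Longrightarrow> q \<le> TB \<Longrightarrow>
                 left_wins TB X' q lm \<Longrightarrow> left_wins TB (gsum Y X') q lm"
    and "YL |\<in>| lopts Y" "left_wins TB (gsum YL X) p False"
    and ropts_Y: "\<And>YR r. YR |\<in>| ropts Y \<Longrightarrow> 0 < r \<Longrightarrow> p + r \<le> TB \<Longrightarrow>
                 left_wins TB (gsum YR X) (p + r) True"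
  shows "left_wins TB (gsum Y X) p True"
proof -
  obtain l where "l \<le> p" and win: "\<And>r. r \<le> TB - p \<Longrightarrow> left_wins_round TB X p False l r"
    using assms(1) unfolding left_wins_iff_round by blast
  \<comment> \<open>With the marker Left wins a tie at her bid l: for l = 0 by moving to YL, otherwise by the
      move her X-strategy has against a zero bid.\<close>
  have tie: "\<exists>g\<in>fset (lopts (gsum Y X)). left_wins TB g (p - l) False"
  proof (cases "l = 0")
    case True
    with assms(4,5) show ?thesis by (auto intro: lopts_gsumI1)
  next
    case False
    then have "left_wins_round TB X p False l 0" using win by simp
    with False opts[of _ "p - l"] \<open>p \<le> TB\<close> show ?thesis
      by (fastforce simp: left_wins_round_False intro: lopts_gsumI2)
  qed
  have "left_wins_round TB (gsum Y X) p True l r" if "r \<le> TB - p" for r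
    using win[OF that] tie opts[of _ "p - l"] opts[of _ "p + r"] ropts_Y[of _ r] \<open>p \<le> TB\<close> that
    by (cases r l rule: linorder_cases)
       (fastforce simp: left_wins_round_False left_wins_round_True
          intro: lopts_gsumI2 elim!: ropts_gsumE)+
  with \<open>l \<le> p\<close> show ?thesis
    unfolding left_wins_iff_round by blast
qed

lemma not_left_wins_gsum_False:
  assumes "\<not> left_wins TB X p False" "p \<le> TB"
    and opts: "\<And>X' q lm. X' |\<in>| lopts X \<or> X' |\<in>| ropts X \<Longrightarrow> q \<le> TB \<Longrightarrow>
                 \<not> left_wins TB X' q lm \<Longrightarrow> \<not> left_wins TB (gsum Y X') q lm"
    and lopts_Y: "\<And>YL l. YL |\<in>| lopts Y \<Longrightarrow> 0 < l \<Longrightarrow> l \<le> p \<Longrightarrow>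
                 \<not> left_wins TB (gsum YL X) (p - l) False"
  shows "\<not> left_wins TB (gsum Y X) p False"
  unfolding not_left_wins_iff_round
proof (intro allI impI)
  fix l assume "l \<le> p"
  then obtain r where "r \<le> TB - p" and lose: "\<not> left_wins_round TB X p False l r"
    using assms(1) unfolding not_left_wins_iff_round by blast
  have "\<not> left_wins_round TB (gsum Y X) p False l r"
    using lose opts[of _ "p - l"] opts[of _ "p + r"] lopts_Y[of _ l] \<open>p \<le> TB\<close> \<open>l \<le> p\<close> \<open>r \<le> TB - p\<close>
    by (cases r l rule: linorder_cases)
       (fastforce simp: left_wins_round_False intro: ropts_gsumI2 elim!: lopts_gsumE)+
  with \<open>r \<le> TB - p\<close> show "\<exists>r\<le>TB - p. \<not> left_wins_round TB (gsum Y X) p False l r"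
    by blast
qed

lemma not_left_wins_gsum_True:
  assumes "\<not> left_wins TB X p True" "p \<le> TB"
    and opts: "\<And>X' q lm. X' |\<in>| lopts X \<or> X' |\<in>| ropts X \<Longrightarrow> q \<le> TB \<Longrightarrow>
                 \<not> left_wins TB X' q lm \<Longrightarrow> \<not> left_wins TB (gsum Y X') q lm"
    and lopts_Y: "\<And>YL l. YL |\<in>| lopts Y \<Longrightarrow> l \<le> p \<Longrightarrow>
                 \<not> left_wins TB (gsum YL X) (p - l) False"
    and lopts_Y_True: "\<And>YL l. YL |\<in>| lopts Y \<Longrightarrow> 0 < l \<Longrightarrow> l \<le> p \<Longrightarrow>
                 \<not> left_wins TB (gsum YL X) (p - l) True"
  shows "\<not> left_wins TB (gsum Y X) p True"
  unfolding not_left_wins_iff_round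
proof (intro allI impI)
  fix l assume "l \<le> p"
  then obtain r where "r \<le> TB - p" and lose: "\<not> left_wins_round TB X p True l r"
    using assms(1) unfolding not_left_wins_iff_round by blast
  have "\<not> left_wins_round TB (gsum Y X) p True l r"
    using lose opts[of _ "p - l"] opts[of _ "p + r"] lopts_Y[of _ l] lopts_Y_True[of _ l]
      \<open>p \<le> TB\<close> \<open>l \<le> p\<close> \<open>r \<le> TB - p\<close>
    by (cases r l rule: linorder_cases)
       (fastforce simp: left_wins_round_True intro: ropts_gsumI2 elim!: lopts_gsumE)+
  with \<open>r \<le> TB - p\<close> show "\<exists>r\<le>TB - p. \<not> left_wins_round TB (gsum Y X) p True l r"
    by blast
qed

lemma not_left_wins_gsum_False_of_True:
  assumes "\<not> left_wins TB X p True" "p \<le> TB"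
    and opts: "\<And>X' q lm. X' |\<in>| lopts X \<or> X' |\<in>| ropts X \<Longrightarrow> q \<le> TB \<Longrightarrow>
                 \<not> left_wins TB X' q lm \<Longrightarrow> \<not> left_wins TB (gsum Y X') q lm"
    and "YR |\<in>| ropts Y" "\<not> left_wins TB (gsum YR X) p True"
    and lopts_Y: "\<And>YL l. YL |\<in>| lopts Y \<Longrightarrow> 0 < l \<Longrightarrow> l \<le> p \<Longrightarrow>
                 \<not> left_wins TB (gsum YL X) (p - l) False"
  shows "\<not> left_wins TB (gsum Y X) p False"
  unfolding not_left_wins_iff_round
proof (intro allI impI)
  fix l assume "l \<le> p"
  then obtain r where "r \<le> TB - p" and lose: "\<not> left_wins_round TB X p True l r"
    using assms(1) unfolding not_left_wins_iff_round by blast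
  have outbid: "\<not> left_wins_round TB (gsum Y X) p False l r'"
    if "r' < l" "\<forall>g\<in>fset (lopts X). \<not> left_wins TB g (p - l) False" for r'
    using that opts[of _ "p - l"] lopts_Y[of _ l] \<open>p \<le> TB\<close> \<open>l \<le> p\<close>
    by (fastforce simp: left_wins_round_False elim!: lopts_gsumE)
  show "\<exists>r\<le>TB - p. \<not> left_wins_round TB (gsum Y X) p False l r"
  proof (cases r l rule: linorder_cases)
    case less
    with lose outbid \<open>r \<le> TB - p\<close> show ?thesis
      by (auto simp: left_wins_round_True)
  next
    case equal
    show ?thesis
    proof (cases "l = 0")
      case True
      with assms(4,5) have "\<not> left_wins_round TB (gsum Y X) p False l 0"
        by (auto simp: left_wins_round_False intro: ropts_gsumI1)
      then show ?thesis by blast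
    next
      case False
      \<comment> \<open>Right underbids by one, forcing Left to move while Right keeps the marker.\<close>
      with equal lose outbid[of "l - 1"] \<open>r \<le> TB - p\<close> show ?thesis
        by (auto simp: left_wins_round_True intro!: exI[of _ "l - 1"])
    qed
  next
    case greater
    with lose opts[of _ "p + r"] \<open>p \<le> TB\<close> \<open>r \<le> TB - p\<close> show ?thesis
      by (fastforce simp: left_wins_round_True left_wins_round_False intro: ropts_gsumI2)
  qed
qed

lemma game_ge_gsum_left_wins:
  "game_ge TB A B \<Longrightarrow> p \<le> TB \<Longrightarrow> left_wins TB (gsum (gsum B C) X) p lm \<Longrightarrow>
   left_wins TB (gsum (gsum A C) X) p lm"
  by (simp add: game_ge_def gsum_assoc)

lemma game_ge_zero_right_iff:
  "game_ge TB A zero_game \<longleftrightarrow> (\<forall>X p lm. p \<le> TB \<longrightarrow> left_wins TB X p lm \<longrightarrow> left_wins TB (gsum A X) p lm)"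
  by (simp add: game_ge_def)

lemma game_ge_zero_left_iff:
  "game_ge TB zero_game A \<longleftrightarrow>
     (\<forall>X p lm. p \<le> TB \<longrightarrow> \<not> left_wins TB X p lm \<longrightarrow> \<not> left_wins TB (gsum A X) p lm)"
  by (auto simp: game_ge_def)

lemma game_ge_gsum_not_left_wins:
  "game_ge TB A B \<Longrightarrow> p \<le> TB \<Longrightarrow> \<not> left_wins TB (gsum (gsum A C) X) p lm \<Longrightarrow>
   \<not> left_wins TB (gsum (gsum B C) X) p lm"
  using game_ge_gsum_left_wins by blast

definition game_ge_marker :: "nat \<Rightarrow> game \<Rightarrow> game \<Rightarrow> bool" where
  "game_ge_marker TB G H =
     (\<forall>X p. p \<le> TB \<longrightarrow> left_wins TB (gsum H X) p False \<longrightarrow> left_wins TB (gsum G X) p True)"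

lemma game_ge_marker_zero_right_iff:
  "game_ge_marker TB A zero_game \<longleftrightarrow>
     (\<forall>X p. p \<le> TB \<longrightarrow> left_wins TB X p False \<longrightarrow> left_wins TB (gsum A X) p True)"
  by (simp add: game_ge_marker_def)

lemma game_ge_marker_zero_left_iff:
  "game_ge_marker TB zero_game A \<longleftrightarrow>
     (\<forall>X p. p \<le> TB \<longrightarrow> \<not> left_wins TB X p True \<longrightarrow> \<not> left_wins TB (gsum A X) p False)"
  by (auto simp: game_ge_marker_def)

lemma budget_induct_down [consumes 1, case_names step]:
  fixes p TB :: nat
  assumes "p \<le> TB"
    and "\<And>p. p \<le> TB \<Longrightarrow> (\<And>r. 0 < r \<Longrightarrow> p + r \<le> TB \<Longrightarrow> P (p + r)) \<Longrightarrow> P p"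
  shows "P p"
  using assms(1)
proof (induction "TB - p" arbitrary: p rule: less_induct)
  case less
  show ?case
    by (rule assms(2)[OF less.prems]) (rule less.hyps; use less.prems in auto)
qed

lemma budget_induct_up [consumes 1, case_names step]:
  fixes p TB :: nat
  assumes "p \<le> TB"
    and "\<And>p. p \<le> TB \<Longrightarrow> (\<And>l. 0 < l \<Longrightarrow> l \<le> p \<Longrightarrow> P (p - l)) \<Longrightarrow> P p"
  shows "P p"
  using assms(1)
proof (induction p rule: less_induct)
  case (less p)
  show ?case
    by (rule assms(2)[OF less.prems]) (rule less.IH; use less.prems in auto)
qed

context
  fixes TB :: nat and G :: game
  assumes number: "is_number TB G"
    and options_inverse: "\<And>H. H |\<in>| lopts G \<or> H |\<in>| ropts G \<Longrightarrow>
           game_ge TB (gsum H (conj_game H)) zero_game"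
    and options_marker: "\<And>H HL. H |\<in>| lopts G \<or> H |\<in>| ropts G \<Longrightarrow> HL |\<in>| lopts H \<Longrightarrow>
           game_ge_marker TB (gsum H (conj_game HL)) zero_game"
begin

lemma game_ge_marker_gsum_conj_lopt:
  assumes GL: "GL |\<in>| lopts G"
  shows "game_ge_marker TB (gsum G (conj_game GL)) zero_game"
  unfolding game_ge_marker_zero_right_iff
proof (intro allI impI)
  fix X p assume "p \<le> TB" "left_wins TB X p False"
  then show "left_wins TB (gsum (gsum G (conj_game GL)) X) p True"
  proof (induction p rule: budget_induct_down)
    case (step p)
    have G_GL: "game_ge TB G GL"
      using is_number_lopt[OF number GL] by blast
    show ?case
    proof (rule left_wins_gsum_True_of_False[OF step.prems \<open>p \<le> TB\<close>])
      fix X' q lm assume "q \<le> TB" "left_wins TB X' q lm"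
      then show "left_wins TB (gsum (gsum G (conj_game GL)) X') q lm"
        using options_inverse[of GL] GL game_ge_gsum_left_wins[OF G_GL]
        by (auto simp: game_ge_zero_right_iff)
    next
      show "gsum GL (conj_game GL) |\<in>| lopts (gsum G (conj_game GL))"
        using GL by (rule lopts_gsumI1)
      show "left_wins TB (gsum (gsum GL (conj_game GL)) X) p False"
        using options_inverse[of GL] GL step by (auto simp: game_ge_zero_right_iff)
    next
      fix YR r assume YR: "YR |\<in>| ropts (gsum G (conj_game GL))" and r: "0 < r" "p + r \<le> TB"
      have X: "left_wins TB X (p + r) False"
        using left_wins_mono[OF step.prems] r by simp
      from YR show "left_wins TB (gsum YR X) (p + r) True"
      proof (cases rule: ropts_gsumE)
        case (1 GR)
        then show ?thesis
          using step.IH[OF r X] is_number_ropt[OF number] r(2) game_ge_gsum_left_wins by blast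
      next
        case (2 h)
        then obtain GLL where "GLL |\<in>| lopts GL" "YR = gsum G (conj_game GLL)"
          by auto
        then show ?thesis
          using options_marker[of GL GLL] GL X r(2) game_ge_gsum_left_wins[OF G_GL]
          by (auto simp: game_ge_marker_zero_right_iff gsum_assoc)
      qed
    qed
  qed
qed


context
  fixes X :: game
  assumes options_X: "\<And>X' q lm. X' |\<in>| lopts X \<or> X' |\<in>| ropts X \<Longrightarrow> q \<le> TB \<Longrightarrow>
             left_wins TB X' q lm \<Longrightarrow> left_wins TB (gsum (gsum G (conj_game G)) X') q lm"
begin

lemma left_wins_gsum_ropt_conj:
  assumes GR: "GR |\<in>| ropts G"
  shows "p \<le> TB \<Longrightarrow> left_wins TB X p False \<Longrightarrow>
         left_wins TB (gsum (gsum GR (conj_game G)) X) p True"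
proof (induction p rule: budget_induct_down)
  case (step p)
  have GR_G: "game_ge TB GR G" and "is_number TB GR"
    using is_number_ropt[OF number GR] by blast+
  show ?case
  proof (rule left_wins_gsum_True_of_False[OF step.prems \<open>p \<le> TB\<close>])
    fix X' q lm assume "X' |\<in>| lopts X \<or> X' |\<in>| ropts X" "q \<le> TB" "left_wins TB X' q lm"
    then show "left_wins TB (gsum (gsum GR (conj_game G)) X') q lm"
      using options_X game_ge_gsum_left_wins[OF GR_G] by blast
  next
    show "gsum GR (conj_game GR) |\<in>| lopts (gsum GR (conj_game G))"
      using GR by (auto intro: lopts_gsumI2)
    show "left_wins TB (gsum (gsum GR (conj_game GR)) X) p False"
      using options_inverse[of GR] GR step by (auto simp: game_ge_zero_right_iff)
  next
    fix YR r assume YR: "YR |\<in>| ropts (gsum GR (conj_game G))" and r: "0 < r" "p + r \<le> TB"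
    have X: "left_wins TB X (p + r) False"
      using left_wins_mono[OF step.prems] r by simp
    from YR show "left_wins TB (gsum YR X) (p + r) True"
    proof (cases rule: ropts_gsumE)
      case (1 GRR)
      then show ?thesis
        using step.IH[OF r X] is_number_ropt[OF \<open>is_number TB GR\<close>] r(2) game_ge_gsum_left_wins
        by blast
    next
      case (2 h)
      then obtain GL where "GL |\<in>| lopts G" "YR = gsum GR (conj_game GL)"
        by auto
      then show ?thesis
        using game_ge_marker_gsum_conj_lopt X r(2) game_ge_gsum_left_wins[OF GR_G]
        by (auto simp: game_ge_marker_zero_right_iff gsum_assoc)
    qed
  qed
qed

lemma left_wins_gsum_conj_True:
  "p \<le> TB \<Longrightarrow> left_wins TB X p True \<Longrightarrow> left_wins TB (gsum (gsum G (conj_game G)) X) p True"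
proof (induction p rule: budget_induct_down)
  case (step p)
  show ?case
  proof (rule left_wins_gsum_True[OF step.prems \<open>p \<le> TB\<close> options_X])
    fix YR r assume YR: "YR |\<in>| ropts (gsum G (conj_game G))" and r: "0 < r" "p + r \<le> TB"
    have X: "left_wins TB X (p + r) True"
      using left_wins_mono[OF step.prems] r by simp
    from YR show "left_wins TB (gsum YR X) (p + r) True"
    proof (cases rule: ropts_gsumE)
      case (1 GR)
      then show ?thesis
        using step.IH[OF r X] is_number_ropt[OF number] r(2) game_ge_gsum_left_wins by blast
    next
      case (2 h)
      then obtain GL where "GL |\<in>| lopts G" "YR = gsum G (conj_game GL)"
        by auto
      moreover have "left_wins TB (gsum (gsum GL (conj_game GL)) X) (p + r) True"
        using options_inverse[of GL] \<open>GL |\<in>| lopts G\<close> X r(2)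
        by (auto simp: game_ge_zero_right_iff)
      ultimately show ?thesis
        using is_number_lopt[OF number] r(2) game_ge_gsum_left_wins by (simp add: gsum_assoc) blast
    qed
  qed blast+
qed

lemma left_wins_gsum_conj_False:
  "p \<le> TB \<Longrightarrow> left_wins TB X p False \<Longrightarrow> left_wins TB (gsum (gsum G (conj_game G)) X) p False"
proof (induction p rule: budget_induct_down)
  case (step p)
  show ?case
  proof (rule left_wins_gsum_False[OF step.prems \<open>p \<le> TB\<close> options_X])
    fix YR r assume YR: "YR |\<in>| ropts (gsum G (conj_game G))" and r: "p + r \<le> TB"
    have X: "left_wins TB X (p + r) False"
      using left_wins_mono[OF step.prems] r by simp
    from YR show "left_wins TB (gsum YR X) (p + r) True"
    proof (cases rule: ropts_gsumE)
      case (1 GR)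
      then show ?thesis
        using left_wins_gsum_ropt_conj X r by simp
    next
      case (2 h)
      then obtain GL where "GL |\<in>| lopts G" "YR = gsum G (conj_game GL)"
        by auto
      then show ?thesis
        using game_ge_marker_gsum_conj_lopt X r
        by (auto simp: game_ge_marker_zero_right_iff gsum_assoc)
    qed
  next
    fix YR r assume YR: "YR |\<in>| ropts (gsum G (conj_game G))" and r: "0 < r" "p + r \<le> TB"
    have X: "left_wins TB X (p + r) False"
      using left_wins_mono[OF step.prems] r by simp
    from YR show "left_wins TB (gsum YR X) (p + r) False"
    proof (cases rule: ropts_gsumE)
      case (1 GR)
      then show ?thesis
        using step.IH[OF r X] is_number_ropt[OF number] r(2) game_ge_gsum_left_wins by blast
    next
      case (2 h)
      then obtain GL where "GL |\<in>| lopts G" "YR = gsum G (conj_game GL)"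
        by auto
      moreover have "left_wins TB (gsum (gsum GL (conj_game GL)) X) (p + r) False"
        using options_inverse[of GL] \<open>GL |\<in>| lopts G\<close> X r(2)
        by (auto simp: game_ge_zero_right_iff)
      ultimately show ?thesis
        using is_number_lopt[OF number] r(2) game_ge_gsum_left_wins by (simp add: gsum_assoc) blast
    qed
  qed blast+
qed

end

lemma game_ge_gsum_conj_zero: "game_ge TB (gsum G (conj_game G)) zero_game"
  unfolding game_ge_zero_right_iff
proof (intro allI impI)
  fix X p lm assume "p \<le> TB" "left_wins TB X p lm"
  then show "left_wins TB (gsum (gsum G (conj_game G)) X) p lm"
  proof (induction X arbitrary: p lm rule: measure_induct_rule[of size])
    case (less X)
    have options: "left_wins TB (gsum (gsum G (conj_game G)) X') q lm'"
      if "X' |\<in>| lopts X \<or> X' |\<in>| ropts X" "q \<le> TB" "left_wins TB X' q lm'" for X' q lm'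
      using less.IH[of X'] that size_lopt size_ropt by blast
    show ?case
      using less.prems
      by (induct lm)
         (rule left_wins_gsum_conj_True left_wins_gsum_conj_False; use options in blast)+
  qed
qed

end

lemma number_gsum_conj_ge_zero:
  "is_number TB G \<Longrightarrow> game_ge TB (gsum G (conj_game G)) zero_game \<and>
     (\<forall>GL. GL |\<in>| lopts G \<longrightarrow> game_ge_marker TB (gsum G (conj_game GL)) zero_game)"
proof (induction G rule: measure_induct_rule[of size])
  case (less G)
  have IH: "game_ge TB (gsum H (conj_game H)) zero_game \<and>
      (\<forall>HL. HL |\<in>| lopts H \<longrightarrow> game_ge_marker TB (gsum H (conj_game HL)) zero_game)"
    if "H |\<in>| lopts G \<or> H |\<in>| ropts G" for H
    using that less size_lopt size_ropt is_number_lopt is_number_ropt by blast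
  then have "\<And>H. H |\<in>| lopts G \<or> H |\<in>| ropts G \<Longrightarrow> game_ge TB (gsum H (conj_game H)) zero_game"
    and "\<And>H HL. H |\<in>| lopts G \<or> H |\<in>| ropts G \<Longrightarrow> HL |\<in>| lopts H \<Longrightarrow>
           game_ge_marker TB (gsum H (conj_game HL)) zero_game"
    by blast+
  with less.prems show ?case
    using game_ge_gsum_conj_zero game_ge_marker_gsum_conj_lopt by blast
qed

context
  fixes TB :: nat and G :: game
  assumes number: "is_number TB G"
    and options_inverse: "\<And>H. H |\<in>| lopts G \<or> H |\<in>| ropts G \<Longrightarrow>
           game_ge TB zero_game (gsum H (conj_game H))"
    and options_marker: "\<And>H HR. H |\<in>| lopts G \<or> H |\<in>| ropts G \<Longrightarrow> HR |\<in>| ropts H \<Longrightarrow>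
           game_ge_marker TB zero_game (gsum H (conj_game HR))"
begin

lemma game_ge_marker_zero_gsum_conj_ropt:
  assumes GR: "GR |\<in>| ropts G"
  shows "game_ge_marker TB zero_game (gsum G (conj_game GR))"
  unfolding game_ge_marker_zero_left_iff
proof (intro allI impI)
  fix X p assume "p \<le> TB" "\<not> left_wins TB X p True"
  then show "\<not> left_wins TB (gsum (gsum G (conj_game GR)) X) p False"
  proof (induction p rule: budget_induct_up)
    case (step p)
    have GR_G: "game_ge TB GR G"
      using is_number_ropt[OF number GR] by blast
    show ?case
    proof (rule not_left_wins_gsum_False_of_True[OF step.prems \<open>p \<le> TB\<close>])
      fix X' q lm assume "q \<le> TB" "\<not> left_wins TB X' q lm"
      then show "\<not> left_wins TB (gsum (gsum G (conj_game GR)) X') q lm"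
        using options_inverse[of GR] GR game_ge_gsum_not_left_wins[OF GR_G]
        by (auto simp: game_ge_zero_left_iff)
    next
      show "gsum GR (conj_game GR) |\<in>| ropts (gsum G (conj_game GR))"
        using GR by (rule ropts_gsumI1)
      show "\<not> left_wins TB (gsum (gsum GR (conj_game GR)) X) p True"
        using options_inverse[of GR] GR step by (auto simp: game_ge_zero_left_iff)
    next
      fix YL l assume YL: "YL |\<in>| lopts (gsum G (conj_game GR))" and l: "0 < l" "l \<le> p"
      have X: "\<not> left_wins TB X (p - l) True"
        using left_wins_mono step.prems \<open>p \<le> TB\<close> by (meson diff_le_self)
      have "p - l \<le> TB"
        using \<open>p \<le> TB\<close> by simp
      from YL show "\<not> left_wins TB (gsum YL X) (p - l) False"
      proof (cases rule: lopts_gsumE)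
        case (1 GL)
        then show ?thesis
          using step.IH[OF l X] is_number_lopt[OF number] \<open>p - l \<le> TB\<close> game_ge_gsum_not_left_wins
          by blast
      next
        case (2 h)
        then obtain GRR where "GRR |\<in>| ropts GR" "YL = gsum G (conj_game GRR)"
          by auto
        then show ?thesis
          using options_marker[of GR GRR] GR X \<open>p - l \<le> TB\<close> game_ge_gsum_not_left_wins[OF GR_G]
          by (auto simp: game_ge_marker_zero_left_iff gsum_assoc)
      qed
    qed
  qed
qed

context
  fixes X :: game
  assumes options_X: "\<And>X' q lm. X' |\<in>| lopts X \<or> X' |\<in>| ropts X \<Longrightarrow> q \<le> TB \<Longrightarrow>
             \<not> left_wins TB X' q lm \<Longrightarrow> \<not> left_wins TB (gsum (gsum G (conj_game G)) X') q lm"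
begin

lemma not_left_wins_gsum_lopt_conj:
  assumes GL: "GL |\<in>| lopts G"
  shows "p \<le> TB \<Longrightarrow> \<not> left_wins TB X p True \<Longrightarrow>
         \<not> left_wins TB (gsum (gsum GL (conj_game G)) X) p False"
proof (induction p rule: budget_induct_up)
  case (step p)
  have G_GL: "game_ge TB G GL" and "is_number TB GL"
    using is_number_lopt[OF number GL] by blast+
  show ?case
  proof (rule not_left_wins_gsum_False_of_True[OF step.prems \<open>p \<le> TB\<close>])
    fix X' q lm assume "X' |\<in>| lopts X \<or> X' |\<in>| ropts X" "q \<le> TB" "\<not> left_wins TB X' q lm"
    then show "\<not> left_wins TB (gsum (gsum GL (conj_game G)) X') q lm"
      using options_X game_ge_gsum_not_left_wins[OF G_GL] by blast
  next
    show "gsum GL (conj_game GL) |\<in>| ropts (gsum GL (conj_game G))"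
      using GL by (auto intro: ropts_gsumI2)
    show "\<not> left_wins TB (gsum (gsum GL (conj_game GL)) X) p True"
      using options_inverse[of GL] GL step by (auto simp: game_ge_zero_left_iff)
  next
    fix YL l assume YL: "YL |\<in>| lopts (gsum GL (conj_game G))" and l: "0 < l" "l \<le> p"
    have X: "\<not> left_wins TB X (p - l) True"
      using left_wins_mono step.prems \<open>p \<le> TB\<close> by (meson diff_le_self)
    have "p - l \<le> TB"
      using \<open>p \<le> TB\<close> by simp
    from YL show "\<not> left_wins TB (gsum YL X) (p - l) False"
    proof (cases rule: lopts_gsumE)
      case (1 GLL)
      then show ?thesis
        using step.IH[OF l X] is_number_lopt[OF \<open>is_number TB GL\<close>] \<open>p - l \<le> TB\<close>
          game_ge_gsum_not_left_wins
        by blast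
    next
      case (2 h)
      then obtain GR where "GR |\<in>| ropts G" "YL = gsum GL (conj_game GR)"
        by auto
      then show ?thesis
        using game_ge_marker_zero_gsum_conj_ropt X \<open>p - l \<le> TB\<close> game_ge_gsum_not_left_wins[OF G_GL]
        by (auto simp: game_ge_marker_zero_left_iff gsum_assoc)
    qed
  qed
qed

lemma not_left_wins_gsum_conj_False:
  "p \<le> TB \<Longrightarrow> \<not> left_wins TB X p False \<Longrightarrow>
   \<not> left_wins TB (gsum (gsum G (conj_game G)) X) p False"
proof (induction p rule: budget_induct_up)
  case (step p)
  show ?case
  proof (rule not_left_wins_gsum_False[OF step.prems \<open>p \<le> TB\<close> options_X])
    fix YL l assume YL: "YL |\<in>| lopts (gsum G (conj_game G))" and l: "0 < l" "l \<le> p"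
    have X: "\<not> left_wins TB X (p - l) False"
      using left_wins_mono step.prems \<open>p \<le> TB\<close> by (meson diff_le_self)
    have "p - l \<le> TB"
      using \<open>p \<le> TB\<close> by simp
    from YL show "\<not> left_wins TB (gsum YL X) (p - l) False"
    proof (cases rule: lopts_gsumE)
      case (1 GL)
      then show ?thesis
        using step.IH[OF l X] is_number_lopt[OF number] \<open>p - l \<le> TB\<close> game_ge_gsum_not_left_wins
        by blast
    next
      case (2 h)
      then obtain GR where GR: "GR |\<in>| ropts G" "YL = gsum G (conj_game GR)"
        by auto
      moreover have "\<not> left_wins TB (gsum (gsum GR (conj_game GR)) X) (p - l) False"
        using options_inverse[of GR] GR X \<open>p - l \<le> TB\<close> by (auto simp: game_ge_zero_left_iff)
      ultimately show ?thesis
        using is_number_ropt[OF number] \<open>p - l \<le> TB\<close> game_ge_gsum_not_left_wins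
        by (simp add: gsum_assoc) blast
    qed
  qed blast+
qed

lemma not_left_wins_gsum_conj_True:
  "p \<le> TB \<Longrightarrow> \<not> left_wins TB X p True \<Longrightarrow>
   \<not> left_wins TB (gsum (gsum G (conj_game G)) X) p True"
proof (induction p rule: budget_induct_up)
  case (step p)
  show ?case
  proof (rule not_left_wins_gsum_True[OF step.prems \<open>p \<le> TB\<close> options_X])
    fix YL l assume YL: "YL |\<in>| lopts (gsum G (conj_game G))" and l: "l \<le> p"
    have X: "\<not> left_wins TB X (p - l) True"
      using left_wins_mono step.prems \<open>p \<le> TB\<close> by (meson diff_le_self)
    have "p - l \<le> TB"
      using \<open>p \<le> TB\<close> by simp
    from YL show "\<not> left_wins TB (gsum YL X) (p - l) False"
    proof (cases rule: lopts_gsumE)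
      case (1 GL)
      then show ?thesis
        using not_left_wins_gsum_lopt_conj X \<open>p - l \<le> TB\<close> by simp
    next
      case (2 h)
      then obtain GR where "GR |\<in>| ropts G" "YL = gsum G (conj_game GR)"
        by auto
      then show ?thesis
        using game_ge_marker_zero_gsum_conj_ropt X \<open>p - l \<le> TB\<close>
        by (auto simp: game_ge_marker_zero_left_iff gsum_assoc)
    qed
  next
    fix YL l assume YL: "YL |\<in>| lopts (gsum G (conj_game G))" and l: "0 < l" "l \<le> p"
    have X: "\<not> left_wins TB X (p - l) True"
      using left_wins_mono step.prems \<open>p \<le> TB\<close> by (meson diff_le_self)
    have "p - l \<le> TB"
      using \<open>p \<le> TB\<close> by simp
    from YL show "\<not> left_wins TB (gsum YL X) (p - l) True"
    proof (cases rule: lopts_gsumE)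
      case (1 GL)
      then show ?thesis
        using step.IH[OF l X] is_number_lopt[OF number] \<open>p - l \<le> TB\<close> game_ge_gsum_not_left_wins
        by blast
    next
      case (2 h)
      then obtain GR where GR: "GR |\<in>| ropts G" "YL = gsum G (conj_game GR)"
        by auto
      moreover have "\<not> left_wins TB (gsum (gsum GR (conj_game GR)) X) (p - l) True"
        using options_inverse[of GR] GR X \<open>p - l \<le> TB\<close> by (auto simp: game_ge_zero_left_iff)
      ultimately show ?thesis
        using is_number_ropt[OF number] \<open>p - l \<le> TB\<close> game_ge_gsum_not_left_wins
        by (simp add: gsum_assoc) blast
    qed
  qed blast+
qed

end

lemma game_ge_zero_gsum_conj: "game_ge TB zero_game (gsum G (conj_game G))"
  unfolding game_ge_zero_left_iff
proof (intro allI impI)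
  fix X p lm assume "p \<le> TB" "\<not> left_wins TB X p lm"
  then show "\<not> left_wins TB (gsum (gsum G (conj_game G)) X) p lm"
  proof (induction X arbitrary: p lm rule: measure_induct_rule[of size])
    case (less X)
    have options: "\<not> left_wins TB (gsum (gsum G (conj_game G)) X') q lm'"
      if "X' |\<in>| lopts X \<or> X' |\<in>| ropts X" "q \<le> TB" "\<not> left_wins TB X' q lm'" for X' q lm'
      using less.IH[of X'] that size_lopt size_ropt by blast
    show ?case
      using less.prems
      by (induct lm)
         (rule not_left_wins_gsum_conj_True not_left_wins_gsum_conj_False; use options in blast)+
  qed
qed

end

lemma number_zero_ge_gsum_conj:
  "is_number TB G \<Longrightarrow> game_ge TB zero_game (gsum G (conj_game G)) \<and>
     (\<forall>GR. GR |\<in>| ropts G \<longrightarrow> game_ge_marker TB zero_game (gsum G (conj_game GR)))"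
proof (induction G rule: measure_induct_rule[of size])
  case (less G)
  have IH: "game_ge TB zero_game (gsum H (conj_game H)) \<and>
      (\<forall>HR. HR |\<in>| ropts H \<longrightarrow> game_ge_marker TB zero_game (gsum H (conj_game HR)))"
    if "H |\<in>| lopts G \<or> H |\<in>| ropts G" for H
    using that less size_lopt size_ropt is_number_lopt is_number_ropt by blast
  then have "\<And>H. H |\<in>| lopts G \<or> H |\<in>| ropts G \<Longrightarrow> game_ge TB zero_game (gsum H (conj_game H))"
    and "\<And>H HR. H |\<in>| lopts G \<or> H |\<in>| ropts G \<Longrightarrow> HR |\<in>| ropts H \<Longrightarrow>
           game_ge_marker TB zero_game (gsum H (conj_game HR))"
    by blast+
  with less.prems show ?case
    using game_ge_zero_gsum_conj game_ge_marker_zero_gsum_conj_ropt by blast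
qed

lemma game_ge_of_inverses:
  assumes "game_ge TB (gsum G H) zero_game" and "game_ge TB zero_game (gsum G H')"
  shows "game_ge TB H H'"
  unfolding game_ge_def
proof (intro allI impI)
  fix X p lm assume "p \<le> TB" "left_wins TB (gsum H' X) p lm"
  with assms(1) have "left_wins TB (gsum (gsum G H) (gsum H' X)) p lm"
    by (simp add: game_ge_def)
  then have "left_wins TB (gsum (gsum G H') (gsum H X)) p lm"
    by (simp add: gsum.assoc gsum.left_commute)
  with assms(2) \<open>p \<le> TB\<close> show "left_wins TB (gsum H X) p lm"
    by (simp add: game_ge_def)
qed

theorem mainTheorem8:
  fixes TB :: nat and G :: game
  assumes "is_number TB G"
  shows "game_eq TB (gsum G (conj_game G)) zero_game \<and>
         (\<forall>G'. game_eq TB (gsum G G') zero_game \<longrightarrow> game_eq TB G' (conj_game G))"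
proof -
  have "game_ge TB (gsum G (conj_game G)) zero_game" "game_ge TB zero_game (gsum G (conj_game G))"
    using number_gsum_conj_ge_zero[OF assms] number_zero_ge_gsum_conj[OF assms] by blast+
  then show ?thesis
    unfolding game_eq_def using game_ge_of_inverses by blast
qed

end
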